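(* Let $0<p\le2$ and let $\phi$ be an Orlicz function with $\alpha_\phi>0$. If the Orlicz space $L_\phi$ has type $p$, then $\phi$ satisfies condition $\Delta^{*p}$.
   Context: $(\Omega,\Sigma,\mu)$ is one of: (A) a non-atomic measure space with $\mu(\Omega)=\infty$; (B) a non-atomic measure space with $\mu(\Omega)<\infty$; (C) $\mathbb{N}$ with counting measure. Growth conditions and indices are taken for all arguments in case (A), for large arguments in case (B), and for small arguments in case (C). An Orlicz function is $\phi:[0,\infty)\to[0,\infty)$ with $\phi(0)=0$, strictly increasing, continuous, $\lim_{u\to\infty}\phi(u)=\infty$. $\phi\in\Delta^{*p}$ means there exist $K>0$ (and $v\ge0$ in case (B), $v>0$ in case (C)) with $\phi(au)\ge Ka^p\phi(u)$ for all $a\ge1$ and all $u\ge0$ (A), $u\ge v$ (B), $au\le v$ (C). $\alpha_\phi=\sup\{r:\exists c>0$ (and $v$) with $\phi(au)\ge ca^r\phi(u)$ for all $a\ge1$ and $u\ge0$ (A), $u\ge v$ (B), $0<u\le au\le v$ (C)$\}$. $L_\phi$ is the set of measurable $f$ with $\int\phi(\lambda|f|)\,d\mu<\infty$ for some $\lambda>0$, quasi-normed by $\|f\|=\inf\{\varepsilon>0:\int\phi(|f|/\varepsilon)\,d\mu\le1\}$. With Rademacher functions $r_k(t)=\operatorname{sign}(\sin2^k\pi t)$, a quasi-Banach space $X$ has type $p$ if there is $K>0$ with $\int_0^1\|\sum_{k=1}^n r_k(t)x_k\|\,dt\le K(\sum_{k=1}^n\|x_k\|^p)^{1/p}$ for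 all $x_1,\dots,x_n\in X$. *)

theory Defs
  imports "HOL-Analysis.Analysis"
begin

text \<open>The three settings: (A) non-atomic, infinite measure (growth for all arguments);
 (B) non-atomic, finite measure (large arguments); (C) counting measure on the naturals
 (small arguments).\<close>
datatype setting = SA | SB | SC

definition nonatomic :: "'a measure \<Rightarrow> bool" where
  "nonatomic M \<longleftrightarrow> (\<forall>A\<in>sets M. 0 < emeasure M A \<longrightarrow>
      (\<exists>B\<in>sets M. B \<subseteq> A \<and> 0 < emeasure M B \<and> emeasure M B < emeasure M A))"

definition measure_setting :: "setting \<Rightarrow> 'a measure \<Rightarrow> bool" where
  "measure_setting s M = (case s of
      SA \<Rightarrow> nonatomic M \<and> emeasure M (space M) = \<infinity>
    | SB \<Rightarrow> nonatomic M \<and> 0 < emeasure M (space M) \<and> emeasure M (space M) < \<infinity>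
    | SC \<Rightarrow> (\<exists>f. bij_betw f (UNIV :: nat set) (space M)) \<and> M = count_space (space M))"

definition orlicz_function :: "(real \<Rightarrow> real) \<Rightarrow> bool" where
  "orlicz_function \<phi> \<longleftrightarrow> \<phi> 0 = 0 \<and> strict_mono_on {0..} \<phi> \<and> continuous_on {0..} \<phi>
     \<and> filterlim \<phi> at_top at_top"

definition Delta_star :: "setting \<Rightarrow> real \<Rightarrow> (real \<Rightarrow> real) \<Rightarrow> bool" where
  "Delta_star s p \<phi> = (\<exists>K>0. case s of
      SA \<Rightarrow> (\<forall>a\<ge>1. \<forall>u\<ge>0. \<phi> (a * u) \<ge> K * a powr p * \<phi> u)
    | SB \<Rightarrow> (\<exists>v\<ge>0. \<forall>a\<ge>1. \<forall>u\<ge>v. \<phi> (a * u) \<ge> K * a powr p * \<phi> u)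
    | SC \<Rightarrow> (\<exists>v>0. \<forall>a\<ge>1. \<forall>u\<ge>0. a * u \<le> v \<longrightarrow> \<phi> (a * u) \<ge> K * a powr p * \<phi> u))"

definition lower_growth :: "setting \<Rightarrow> (real \<Rightarrow> real) \<Rightarrow> real \<Rightarrow> bool" where
  "lower_growth s \<phi> r = (\<exists>c>0. case s of
      SA \<Rightarrow> (\<forall>a\<ge>1. \<forall>u\<ge>0. \<phi> (a * u) \<ge> c * a powr r * \<phi> u)
    | SB \<Rightarrow> (\<exists>v\<ge>0. \<forall>a\<ge>1. \<forall>u\<ge>v. \<phi> (a * u) \<ge> c * a powr r * \<phi> u)
    | SC \<Rightarrow> (\<exists>v>0. \<forall>a\<ge>1. \<forall>u. 0 < u \<and> a * u \<le> v \<longrightarrow> \<phi> (a * u) \<ge> c * a powr r * \<phi> u))"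

definition alpha_index :: "setting \<Rightarrow> (real \<Rightarrow> real) \<Rightarrow> ereal" where
  "alpha_index s \<phi> = Sup (ereal ` {r. lower_growth s \<phi> r})"

definition orlicz_space :: "(real \<Rightarrow> real) \<Rightarrow> 'a measure \<Rightarrow> ('a \<Rightarrow> real) set" where
  "orlicz_space \<phi> M = {f \<in> borel_measurable M.
      \<exists>l>0. (\<integral>\<^sup>+ x. ennreal (\<phi> (l * \<bar>f x\<bar>)) \<partial>M) < \<infinity>}"

definition orlicz_norm :: "(real \<Rightarrow> real) \<Rightarrow> 'a measure \<Rightarrow> ('a \<Rightarrow> real) \<Rightarrow> real" where
  "orlicz_norm \<phi> M f = Inf {\<epsilon>. \<epsilon> > 0 \<and> (\<integral>\<^sup>+ x. ennreal (\<phi> (\<bar>f x\<bar> / \<epsilon>)) \<partial>M) \<le> 1}"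

definition rademacher :: "nat \<Rightarrow> real \<Rightarrow> real" where
  "rademacher k t = sgn (sin (2 ^ k * pi * t))"

definition orlicz_has_type :: "real \<Rightarrow> (real \<Rightarrow> real) \<Rightarrow> 'a measure \<Rightarrow> bool" where
  "orlicz_has_type p \<phi> M \<longleftrightarrow> (\<exists>K>0. \<forall>n. \<forall>x :: nat \<Rightarrow> 'a \<Rightarrow> real.
      (\<forall>k\<in>{1..n}. x k \<in> orlicz_space \<phi> M) \<longrightarrow>
      (\<integral>\<^sup>+ t\<in>{0..1}. ennreal (orlicz_norm \<phi> M (\<lambda>\<omega>. \<Sum>k=1..n. rademacher k t * x k \<omega>)) \<partial>lborel)
        \<le> ennreal (K * (\<Sum>k=1..n. orlicz_norm \<phi> M (x k) powr p) powr (1 / p)))"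

end

theory Submission
  imports Defs
begin

text \<open>
  Let \<open>A\<^sub>1, ..., A\<^sub>n\<close> be disjoint sets of measure \<open>m\<close> and \<open>\<phi> w = 1 / m\<close>.
  The functions \<open>w \<cdot> 1\<^bsub>A\<^sub>k\<^esub>\<close> have norm 1, while almost every Rademacher sum of them
  has modulus \<open>w\<close> on \<open>U = \<Union>k. A\<^sub>k\<close>, hence norm \<open>w / y\<close> with \<open>\<phi> y = 1 / (n m)\<close>.
  Type \<open>p\<close> with constant \<open>K\<close> thus gives \<open>w \<le> K n\<^bsup>1/p\<^esup> y\<close>, that is
  \<open>n \<phi> y \<le> \<phi> (K n\<^bsup>1/p\<^esup> y)\<close>; taking \<open>n \<approx> (a / K)\<^bsup>p\<^esup>\<close> yields
  \<open>\<phi> (a y) \<ge> a\<^bsup>p\<^esup> \<phi> y / (2 K\<^bsup>p\<^esup>)\<close>.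
  In a non-atomic space such sets exist as long as \<open>n m\<close> does not exceed the total measure,
  which gives every \<open>y\<close> in case (A) and all large \<open>y\<close> in case (B). On \<open>\<nat>\<close> the sets are
  blocks of \<open>m\<close> atoms, so only \<open>\<phi> y\<close> of the form \<open>1 / (n m)\<close> are directly available;
  rounding costs a further factor 4 and confines the estimate to small arguments (case (C)).
\<close>

lemma orlicz_function_le_iff:
  assumes "orlicz_function \<phi>" "0 \<le> x" "0 \<le> y"
  shows "\<phi> x \<le> \<phi> y \<longleftrightarrow> x \<le> y"
  using assms strict_mono_on_less_eq[of "{0..}" \<phi> x y] by (auto simp: orlicz_function_def)

lemma orlicz_function_pos:
  assumes "orlicz_function \<phi>" "0 < x"
  shows "0 < \<phi> x"
  using assms strict_mono_onD[of "{0..}" \<phi> 0 x] by (auto simp: orlicz_function_def)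

lemma orlicz_function_nonneg:
  assumes "orlicz_function \<phi>" "0 \<le> x"
  shows "0 \<le> \<phi> x"
  using assms orlicz_function_pos[OF assms(1), of x] by (cases "x = 0") (auto simp: orlicz_function_def)

lemma orlicz_function_surj:
  assumes phi: "orlicz_function \<phi>" and t: "0 < t"
  shows "\<exists>x>0. \<phi> x = t"
proof -
  obtain b where b: "t \<le> \<phi> (max b 0)"
    using phi unfolding orlicz_function_def filterlim_at_top eventually_at_top_linorder
    by (meson max.cobounded1)
  moreover have "continuous_on {0..max b 0} \<phi>"
    using phi unfolding orlicz_function_def by (auto intro: continuous_on_subset)
  ultimately obtain x where "0 \<le> x" "\<phi> x = t"
    using IVT'[of \<phi> 0 t "max b 0"] phi t by (auto simp: orlicz_function_def)
  moreover have "x \<noteq> 0" using calculation phi t by (auto simp: orlicz_function_def)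
  ultimately show ?thesis by (auto intro!: exI[of _ x])
qed

lemma nonatomic_finite_subset:
  assumes na: "nonatomic M" and A: "A \<in> sets M" "0 < emeasure M A"
  obtains B where "B \<in> sets M" "B \<subseteq> A" "0 < emeasure M B" "emeasure M B < \<infinity>"
proof (cases "emeasure M A < \<infinity>")
  case True
  then show ?thesis using A that by blast
next
  case False
  obtain B where "B \<in> sets M" "B \<subseteq> A" "0 < emeasure M B" "emeasure M B < emeasure M A"
    using na A unfolding nonatomic_def by blast
  then show ?thesis using False that by (simp add: not_less top_unique)
qed

lemma nonatomic_halving_subset:
  assumes na: "nonatomic M" and B: "B \<in> sets M" "0 < emeasure M B" "emeasure M B < \<infinity>"
  shows "\<exists>C\<in>sets M. C \<subseteq> B \<and> 0 < measure M C \<and> 2 ^ k * measure M C \<le> measure M B"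
proof (induction k)
  case 0
  then show ?case using B by (intro bexI[of _ B]) (auto simp: emeasure_eq_ennreal_measure less_top)
next
  case (Suc k)
  then obtain C where C: "C \<in> sets M" "C \<subseteq> B" "0 < measure M C" "2 ^ k * measure M C \<le> measure M B"
    by blast
  have C_fin: "emeasure M C < \<infinity>"
    using C B emeasure_mono[of C B M] by (simp add: order.strict_trans1)
  then have "0 < emeasure M C" using C by (simp add: emeasure_eq_ennreal_measure less_top)
  then obtain D where D: "D \<in> sets M" "D \<subseteq> C" "0 < emeasure M D" "emeasure M D < emeasure M C"
    using na C(1) unfolding nonatomic_def by blast
  have "emeasure M D = ennreal (measure M D)" "emeasure M C = ennreal (measure M C)"
    using D(4) C_fin by (auto intro!: emeasure_eq_ennreal_measure)
  then have D_meas: "0 < measure M D" "measure M D < measure M C"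
    using D(3,4) by (auto simp: ennreal_less_iff)
  have CD_meas: "measure M (C - D) = measure M C - measure M D"
    using C_fin C D by (intro measure_Diff) auto
  \<comment> \<open>the smaller of \<open>D\<close> and \<open>C - D\<close> has at most half the measure of \<open>C\<close>\<close>
  show ?case
  proof (cases "2 * measure M D \<le> measure M C")
    case True
    have "2 ^ Suc k * measure M D = 2 ^ k * (2 * measure M D)" by simp
    also have "\<dots> \<le> 2 ^ k * measure M C" using True by (intro mult_left_mono) auto
    finally have "2 ^ Suc k * measure M D \<le> measure M B" using C(4) by linarith
    then show ?thesis using C D D_meas by (intro bexI[of _ D]) auto
  next
    case False
    have "2 ^ Suc k * measure M (C - D) = 2 ^ k * (2 * measure M (C - D))" by simp
    also have "\<dots> \<le> 2 ^ k * measure M C" using False CD_meas by (intro mult_left_mono) auto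
    finally have "2 ^ Suc k * measure M (C - D) \<le> measure M B" using C(4) by linarith
    then show ?thesis using C D D_meas CD_meas by (intro bexI[of _ "C - D"]) auto
  qed
qed

lemma nonatomic_small_subset:
  assumes na: "nonatomic M" and A: "A \<in> sets M" "0 < emeasure M A" and d: "0 < d"
  obtains C where "C \<in> sets M" "C \<subseteq> A" "0 < measure M C" "measure M C < d"
proof -
  obtain B where B: "B \<in> sets M" "B \<subseteq> A" "0 < emeasure M B" "emeasure M B < \<infinity>"
    using nonatomic_finite_subset[OF na A] by blast
  obtain k where k: "measure M B / d < 2 ^ k"
    using real_arch_pow[of 2 "measure M B / d"] by auto
  obtain C where C: "C \<in> sets M" "C \<subseteq> B" "0 < measure M C" "2 ^ k * measure M C \<le> measure M B"
    using nonatomic_halving_subset[OF na B(1,3,4), of k] by blast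
  have "measure M B < 2 ^ k * d"
    using k d by (simp add: divide_less_eq mult.commute)
  then have "2 ^ k * measure M C < 2 ^ k * d" using C(4) by linarith
  then have "measure M C < d" by simp
  then show ?thesis using that B C by blast
qed

lemma greedy_exhaustion:
  assumes A: "A \<in> sets M" and c: "0 \<le> c"
  obtains B :: "nat \<Rightarrow> 'a set"
  where "incseq B" "\<And>j. B j \<in> sets M" "\<And>j. B j \<subseteq> A" "\<And>j. emeasure M (B j) \<le> ennreal c"
    "\<And>j D. D \<in> sets M \<Longrightarrow> D \<subseteq> A - B j \<Longrightarrow> measure M (B j) + measure M D \<le> c \<Longrightarrow>
       measure M D \<le> 2 * (measure M (B (Suc j)) - measure M (B j))"
proof -
  define adm where "adm B \<longleftrightarrow> B \<in> sets M \<and> B \<subseteq> A \<and> emeasure M B \<le> ennreal c" for B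
  define cand where "cand B = {C \<in> sets M. C \<subseteq> A - B \<and> measure M B + measure M C \<le> c}" for B
  have step: "\<exists>B'. adm B' \<and> B \<subseteq> B' \<and> (\<forall>D\<in>cand B. measure M D \<le> 2 * (measure M B' - measure M B))"
    if B: "adm B" for B
  proof -
    have B_fin: "emeasure M B \<noteq> top" and B_le: "measure M B \<le> c"
      using B c by (auto simp: adm_def measure_def enn2real_leI top_unique)
    define s where "s = Sup (measure M ` cand B)"
    have "{} \<in> cand B" using B_le by (simp add: cand_def)
    moreover have bdd: "bdd_above (measure M ` cand B)"
      by (rule bdd_aboveI[of _ "c - measure M B"]) (auto simp: cand_def)
    ultimately obtain C where C: "C \<in> cand B" "s \<le> 2 * measure M C" "emeasure M C \<noteq> top"
    proof (cases "s \<le> 0")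
      case True
      then show ?thesis using that[of "{}"] \<open>{} \<in> cand B\<close> by simp
    next
      case False
      then obtain C where "C \<in> cand B" "s / 2 < measure M C"
        using less_cSup_iff[OF _ bdd, of "s / 2"] \<open>{} \<in> cand B\<close> by (auto simp: s_def)
      moreover from this have "emeasure M C \<noteq> top" using False by (auto simp: measure_def)
      ultimately show ?thesis using that by fastforce
    qed
    have meas_BC: "measure M (B \<union> C) = measure M B + measure M C"
      using B C B_fin by (intro measure_Union) (auto simp: adm_def cand_def)
    have "emeasure M (B \<union> C) = emeasure M B + emeasure M C"
      using B C by (intro plus_emeasure[symmetric]) (auto simp: adm_def cand_def)
    also have "\<dots> = ennreal (measure M B + measure M C)"
      using emeasure_eq_ennreal_measure[OF B_fin] emeasure_eq_ennreal_measure[OF C(3)]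
      by (simp del: ennreal_plus add: ennreal_plus[symmetric])
    finally have "adm (B \<union> C)"
      using B C by (auto simp: adm_def cand_def simp del: ennreal_plus intro!: ennreal_leI)
    moreover have "measure M D \<le> 2 * (measure M (B \<union> C) - measure M B)" if "D \<in> cand B" for D
      using cSup_upper[OF imageI[OF that] bdd] C(2) meas_BC by (simp add: s_def)
    ultimately show ?thesis by blast
  qed
  have "adm {}" using A c by (simp add: adm_def)
  then obtain B where B: "\<And>j. adm (B j) \<and> B j \<subseteq> B (Suc j) \<and>
      (\<forall>D\<in>cand (B j). measure M D \<le> 2 * (measure M (B (Suc j)) - measure M (B j)))"
    using dependent_nat_choice[of "\<lambda>_. adm"
        "\<lambda>_ B B'. B \<subseteq> B' \<and> (\<forall>D\<in>cand B. measure M D \<le> 2 * (measure M B' - measure M B))"]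
      step by blast
  show ?thesis
    using that[of B] B by (auto simp: incseq_SucI adm_def cand_def)
qed

lemma nonatomic_subset_emeasure_eq:
  assumes na: "nonatomic M" and A: "A \<in> sets M" and c: "0 \<le> c" "ennreal c \<le> emeasure M A"
  obtains U where "U \<in> sets M" "U \<subseteq> A" "emeasure M U = ennreal c"
proof -
  obtain B where B: "incseq B" "\<And>j. B j \<in> sets M" "\<And>j. B j \<subseteq> A" "\<And>j. emeasure M (B j) \<le> ennreal c"
    and gap: "\<And>j D. D \<in> sets M \<Longrightarrow> D \<subseteq> A - B j \<Longrightarrow> measure M (B j) + measure M D \<le> c \<Longrightarrow>
       measure M D \<le> 2 * (measure M (B (Suc j)) - measure M (B j))"
    using greedy_exhaustion[OF A c(1)] by blast
  define U where "U = (\<Union>j. B j)"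
  have U: "U \<in> sets M" "U \<subseteq> A" using B by (auto simp: U_def)
  have "emeasure M U = (SUP j. emeasure M (B j))"
    unfolding U_def using B by (intro SUP_emeasure_incseq[symmetric]) auto
  then have U_le: "emeasure M U \<le> ennreal c" using B(4) by (simp add: SUP_least)
  then have U_eq: "emeasure M U = ennreal (measure M U)"
    by (intro emeasure_eq_ennreal_measure) (auto simp: top_unique)
  have "emeasure M U = ennreal c"
  proof (rule ccontr)
    assume "emeasure M U \<noteq> ennreal c"
    then have U_less: "measure M U < c" using U_le c(1) U_eq by (auto simp: ennreal_le_iff)
    have "ennreal (measure M U) < ennreal c"
      using U_less by (intro ennreal_lessI) (auto intro: le_less_trans[OF measure_nonneg])
    also have "\<dots> \<le> emeasure M A" by (fact c(2))
    finally have "0 < emeasure M A - emeasure M U" using U_eq by (simp add: diff_gr0_ennreal)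
    then have "0 < emeasure M (A - U)" using U A U_le by (subst emeasure_Diff) (auto simp: top_unique)
    moreover have "A - U \<in> sets M" using A U by blast
    moreover have "0 < c - measure M U" using U_less by simp
    ultimately obtain D where D: "D \<in> sets M" "D \<subseteq> A - U" "0 < measure M D" "measure M D < c - measure M U"
      using nonatomic_small_subset[OF na] by metis
    have B_le_U: "measure M (B j) \<le> measure M U" for j
      using B(2) U(1) U_eq by (intro measure_mono_fmeasurable) (auto simp: U_def fmeasurable_def)
    \<comment> \<open>each greedy step gains at least half of \<open>measure M D\<close>, which is impossible below \<open>c\<close>\<close>
    have step: "measure M D \<le> 2 * (measure M (B (Suc j)) - measure M (B j))" for j
    proof (rule gap)
      show "D \<subseteq> A - B j" using D(2) by (auto simp: U_def)
      show "measure M (B j) + measure M D \<le> c" using B_le_U[of j] D(4) by linarith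
    qed (fact D(1))
    have gain: "real j * measure M D \<le> 2 * measure M (B j)" for j
    proof (induction j)
      case (Suc j)
      then show ?case using step[of j] by (simp add: algebra_simps)
    qed simp
    obtain j where j: "2 * c < real j * measure M D"
      using reals_Archimedean3[OF D(3)] by blast
    have "measure M (B j) \<le> c"
      using B(4)[of j] c(1) by (simp add: measure_def enn2real_leI)
    then show False using gain[of j] j by linarith
  qed
  then show ?thesis using that U by blast
qed

lemma emeasure_UN_disjoint_family_const:
  assumes I: "finite I" and A: "\<And>k. k \<in> I \<Longrightarrow> A k \<in> sets M" "\<And>k. k \<in> I \<Longrightarrow> emeasure M (A k) = ennreal m"
    and disj: "disjoint_family_on A I" and m: "0 \<le> m"
  shows "emeasure M (\<Union>k\<in>I. A k) = ennreal (real (card I) * m)"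
proof -
  have "emeasure M (\<Union>k\<in>I. A k) = (\<Sum>k\<in>I. emeasure M (A k))"
    using I A disj by (intro sum_emeasure[symmetric]) auto
  also have "\<dots> = ennreal (real (card I) * m)"
    using A m by (simp add: ennreal_of_nat_eq_real_of_nat ennreal_mult)
  finally show ?thesis .
qed

lemma nonatomic_disjoint_family_emeasure_eq:
  assumes na: "nonatomic M" and m: "0 \<le> m"
    and total: "ennreal (real n * m) \<le> emeasure M (space M)"
  shows "\<exists>A. (\<forall>k\<in>{1..n}. A k \<in> sets M \<and> emeasure M (A k) = ennreal m) \<and> disjoint_family_on A {1..n}"
  using total
proof (induction n)
  case 0
  then show ?case by (simp add: disjoint_family_on_def)
next
  case (Suc n)
  have "ennreal (real n * m) \<le> ennreal (real (Suc n) * m)" using m by (intro ennreal_leI mult_right_mono) auto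
  then have n_total: "ennreal (real n * m) \<le> emeasure M (space M)" using Suc.prems by (rule order.trans)
  obtain A where A: "\<forall>k\<in>{1..n}. A k \<in> sets M \<and> emeasure M (A k) = ennreal m"
    and disj: "disjoint_family_on A {1..n}"
    using Suc.IH[OF n_total] by blast
  define V where "V = (\<Union>k\<in>{1..n}. A k)"
  have V: "V \<in> sets M" using A by (auto simp: V_def)
  have V_meas: "emeasure M V = ennreal (real n * m)"
    using emeasure_UN_disjoint_family_const[of "{1..n}" A M m] A disj m by (simp add: V_def)
  have "ennreal (real n * m) + ennreal m \<le> emeasure M (space M)"
  proof -
    have "ennreal (real n * m) + ennreal m = ennreal (real n * m + m)"
      by (rule ennreal_plus[symmetric]) (use m in auto)
    also have "real n * m + m = real (Suc n) * m" by (simp add: algebra_simps)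
    finally show ?thesis using Suc.prems by simp
  qed
  then have rest: "ennreal m \<le> emeasure M (space M - V)"
    using V V_meas by (simp add: emeasure_compl ennreal_le_minus_iff add.commute)
  have "space M - V \<in> sets M" using V by blast
  then obtain C where C: "C \<in> sets M" "C \<subseteq> space M - V" "emeasure M C = ennreal m"
    using nonatomic_subset_emeasure_eq[OF na _ m rest] by blast
  have "(A(Suc n := C)) k \<in> sets M \<and> emeasure M ((A(Suc n := C)) k) = ennreal m" if "k \<in> {1..Suc n}" for k
    using A C that by (cases "k = Suc n") auto
  moreover have "disjoint_family_on (A(Suc n := C)) (insert (Suc n) {1..n})"
    using disj C(2) unfolding V_def
    by (subst disjoint_family_on_insert) (auto simp: disjoint_family_on_def)
  moreover have "{1..Suc n} = insert (Suc n) {1..n}" by auto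
  ultimately show ?case by metis
qed

lemma count_space_disjoint_family_card_eq:
  fixes n m :: nat
  assumes f: "bij_betw f (UNIV :: nat set) S"
  shows "\<exists>A. (\<forall>k\<in>{1..n}. A k \<subseteq> S \<and> emeasure (count_space S) (A k) = ennreal (real m))
     \<and> disjoint_family_on A {1..n}"
proof -
  define A where "A k = f ` {k * m ..< k * m + m}" for k
  have inj: "inj f" using f by (simp add: bij_betw_def)
  have "A k \<subseteq> S" for k using f by (auto simp: A_def bij_betw_def)
  moreover have "emeasure (count_space S) (A k) = ennreal (real m)" for k
    using \<open>A k \<subseteq> S\<close> inj
    by (simp add: A_def emeasure_count_space_finite card_image inj_on_subset[OF inj]
        ennreal_of_nat_eq_real_of_nat)
  moreover have "disjoint_family_on A {1..n}"
  proof -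
    \<comment> \<open>the block \<open>{k * m ..< k * m + m}\<close> is the fibre of \<open>\<lambda>i. i div m\<close> over \<open>k\<close>\<close>
    have "i div m = k" if "i \<in> {k * m ..< k * m + m}" for i k
      using that by (intro div_nat_eqI) (auto simp: algebra_simps)
    then have "{k * m ..< k * m + m} \<inter> {j * m ..< j * m + m} = {}" if "k \<noteq> j" for k j
      using that by blast
    then show ?thesis
      unfolding disjoint_family_on_def A_def image_Int[OF inj, symmetric] by simp
  qed
  ultimately show ?thesis by blast
qed

lemma orlicz_norm_abs_scaled_indicator:
  assumes phi: "orlicz_function \<phi>" and f: "\<And>x. \<bar>f x\<bar> = c * indicator A x" and c: "0 < c"
    and A: "A \<in> sets M" "emeasure M A = ennreal m" "0 < m"
    and w: "0 < w" "\<phi> w * m = 1"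
  shows "orlicz_norm \<phi> M f = c / w"
proof -
  have modular: "(\<integral>\<^sup>+ x. ennreal (\<phi> (\<bar>f x\<bar> / e)) \<partial>M) = ennreal (\<phi> (c / e) * m)" if "0 < e" for e
  proof -
    have "(\<integral>\<^sup>+ x. ennreal (\<phi> (\<bar>f x\<bar> / e)) \<partial>M) = (\<integral>\<^sup>+ x. ennreal (\<phi> (c / e)) * indicator A x \<partial>M)"
      using phi f by (intro nn_integral_cong) (auto simp: indicator_def orlicz_function_def)
    also have "\<dots> = ennreal (\<phi> (c / e) * m)"
      using A orlicz_function_nonneg[OF phi, of "c / e"] c that
      by (simp add: nn_integral_cmult_indicator ennreal_mult)
    finally show ?thesis .
  qed
  have threshold: "e > 0 \<and> \<phi> (c / e) * m \<le> 1 \<longleftrightarrow> c / w \<le> e" for e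
  proof (cases "e > 0")
    case True
    have "\<phi> (c / e) * m \<le> 1 \<longleftrightarrow> \<phi> (c / e) \<le> \<phi> w"
      using w A(3) by (metis mult_le_cancel_right_pos)
    also have "\<dots> \<longleftrightarrow> c / w \<le> e"
      using orlicz_function_le_iff[OF phi, of "c / e" w] c w True by (auto simp: field_simps)
    finally show ?thesis using True by simp
  qed (use divide_pos_pos[OF c w(1)] in auto)
  have "{e. e > 0 \<and> (\<integral>\<^sup>+ x. ennreal (\<phi> (\<bar>f x\<bar> / e)) \<partial>M) \<le> 1} = {c / w..}"
  proof (intro set_eqI)
    fix e
    show "e \<in> {e. e > 0 \<and> (\<integral>\<^sup>+ x. ennreal (\<phi> (\<bar>f x\<bar> / e)) \<partial>M) \<le> 1} \<longleftrightarrow> e \<in> {c / w..}"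
      using threshold[of e] modular[of e] by (cases "e > 0") (auto simp: ennreal_le_1)
  qed
  then show ?thesis unfolding orlicz_norm_def by simp
qed

lemma scaled_indicator_in_orlicz_space:
  assumes phi: "orlicz_function \<phi>" and A: "A \<in> sets M" "emeasure M A < \<infinity>" and c: "0 \<le> c"
  shows "(\<lambda>x. c * indicator A x) \<in> orlicz_space \<phi> M"
proof -
  have "(\<integral>\<^sup>+ x. ennreal (\<phi> (1 * \<bar>c * indicator A x\<bar>)) \<partial>M) = (\<integral>\<^sup>+ x. ennreal (\<phi> c) * indicator A x \<partial>M)"
    using phi c by (intro nn_integral_cong) (auto simp: indicator_def orlicz_function_def)
  also have "\<dots> < \<infinity>" using A by (simp add: nn_integral_cmult_indicator ennreal_mult_less_top)
  finally show ?thesis unfolding orlicz_space_def using A by (auto intro!: exI[of _ 1])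
qed

lemma AE_abs_rademacher_eq_1: "AE t in lborel. \<forall>k. \<bar>rademacher k t\<bar> = 1"
proof -
  \<comment> \<open>the Rademacher functions vanish only at dyadic rationals\<close>
  define Z where "Z = {t::real. \<exists>k::nat. sin (2 ^ k * pi * t) = 0}"
  have "Z \<subseteq> (\<lambda>(k::nat, i::int). real_of_int i / 2 ^ k) ` UNIV"
  proof
    fix t assume "t \<in> Z"
    then obtain k :: nat and i :: int where "2 ^ k * pi * t = of_int i * pi"
      by (auto simp: Z_def sin_zero_iff_int2)
    then have "t = real_of_int i / 2 ^ k" by (simp add: field_simps)
    then show "t \<in> (\<lambda>(k::nat, i::int). real_of_int i / 2 ^ k) ` UNIV" by force
  qed
  then have "countable Z" by (rule countable_subset) simp
  then have "AE t in lborel. t \<notin> Z" by (intro AE_not_in countable_imp_null_set_lborel)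
  then show ?thesis by eventually_elim (auto simp: Z_def rademacher_def sgn_if)
qed

lemma abs_sum_signs_disjoint_indicators:
  fixes r :: "nat \<Rightarrow> real"
  assumes disj: "disjoint_family_on A I" and I: "finite I" and r: "\<And>k. \<bar>r k\<bar> = 1"
  shows "\<bar>\<Sum>k\<in>I. r k * (w * indicator (A k) x)\<bar> = \<bar>w\<bar> * indicator (\<Union>k\<in>I. A k) x"
proof (cases "\<exists>j\<in>I. x \<in> A j")
  case True
  then obtain j where j: "j \<in> I" "x \<in> A j" by blast
  then have "x \<notin> A k" if "k \<in> I - {j}" for k
    using disj that unfolding disjoint_family_on_def by blast
  then have "(\<Sum>k\<in>I. r k * (w * indicator (A k) x)) = r j * w"
    using j I by (simp add: sum.remove[of I j] indicator_def)
  then show ?thesis using j r by (auto simp: abs_mult indicator_def)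
qed auto

definition orlicz_type_bound :: "real \<Rightarrow> real \<Rightarrow> (real \<Rightarrow> real) \<Rightarrow> 'a measure \<Rightarrow> bool" where
  "orlicz_type_bound K p \<phi> M \<longleftrightarrow> (\<forall>n. \<forall>x :: nat \<Rightarrow> 'a \<Rightarrow> real.
      (\<forall>k\<in>{1..n}. x k \<in> orlicz_space \<phi> M) \<longrightarrow>
      (\<integral>\<^sup>+ t\<in>{0..1}. ennreal (orlicz_norm \<phi> M (\<lambda>\<omega>. \<Sum>k=1..n. rademacher k t * x k \<omega>)) \<partial>lborel)
        \<le> ennreal (K * (\<Sum>k=1..n. orlicz_norm \<phi> M (x k) powr p) powr (1 / p)))"

lemma orlicz_has_type_iff: "orlicz_has_type p \<phi> M \<longleftrightarrow> (\<exists>K>0. orlicz_type_bound K p \<phi> M)"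
  unfolding orlicz_has_type_def orlicz_type_bound_def by blast

lemma orlicz_type_bound_disjoint_indicators:
  fixes M :: "'a measure"
  assumes phi: "orlicz_function \<phi>" and bound: "orlicz_type_bound K p \<phi> M" and K: "0 \<le> K"
    and n: "1 \<le> n" and m: "0 < m"
    and A: "\<And>k. k \<in> {1..n} \<Longrightarrow> A k \<in> sets M" "\<And>k. k \<in> {1..n} \<Longrightarrow> emeasure M (A k) = ennreal m"
    and disj: "disjoint_family_on A {1..n}"
    and w: "0 < w" "\<phi> w * m = 1" and y: "0 < y" "\<phi> y * (real n * m) = 1"
  shows "w \<le> K * real n powr (1 / p) * y"
proof -
  define x where "x k = (\<lambda>\<omega>. w * indicator (A k) \<omega>)" for k
  define U where "U = (\<Union>k\<in>{1..n}. A k)"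
  have "\<forall>k\<in>{1..n}. x k \<in> orlicz_space \<phi> M"
    using A w by (auto simp: x_def intro!: scaled_indicator_in_orlicz_space[OF phi])
  then have "(\<integral>\<^sup>+ t\<in>{0..1}. ennreal (orlicz_norm \<phi> M (\<lambda>\<omega>. \<Sum>k=1..n. rademacher k t * x k \<omega>)) \<partial>lborel)
      \<le> ennreal (K * (\<Sum>k=1..n. orlicz_norm \<phi> M (x k) powr p) powr (1 / p))"
    using bound unfolding orlicz_type_bound_def by blast
  also have "(\<Sum>k=1..n. orlicz_norm \<phi> M (x k) powr p) = real n"
  proof -
    have "orlicz_norm \<phi> M (x k) = 1" if "k \<in> {1..n}" for k
      using orlicz_norm_abs_scaled_indicator[OF phi _ w(1) A(1)[OF that] A(2)[OF that] m w] w(1)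
      by (simp add: x_def)
    then show ?thesis by simp
  qed
  finally have bound_n: "(\<integral>\<^sup>+ t\<in>{0..1}. ennreal (orlicz_norm \<phi> M (\<lambda>\<omega>. \<Sum>k=1..n. rademacher k t * x k \<omega>)) \<partial>lborel)
      \<le> ennreal (K * real n powr (1 / p))" by simp
  have U_meas: "emeasure M U = ennreal (real n * m)"
    using emeasure_UN_disjoint_family_const[of "{1..n}" A M m] A disj m by (simp add: U_def)
  \<comment> \<open>for almost every \<open>t\<close> the random sign sum has modulus \<open>w\<close> on \<open>U\<close>, so its norm does not depend on \<open>t\<close>\<close>
  have "AE t in lborel. orlicz_norm \<phi> M (\<lambda>\<omega>. \<Sum>k=1..n. rademacher k t * x k \<omega>) = w / y"
    using AE_abs_rademacher_eq_1
  proof eventually_elim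
    case (elim t)
    have U: "U \<in> sets M" using A by (auto simp: U_def)
    show ?case
      using abs_sum_signs_disjoint_indicators[OF disj finite_atLeastAtMost elim[rule_format]] U U_meas m n w(1) y
      by (intro orlicz_norm_abs_scaled_indicator[OF phi]) (auto simp: x_def U_def)
  qed
  then have "(\<integral>\<^sup>+ t\<in>{0..1}. ennreal (orlicz_norm \<phi> M (\<lambda>\<omega>. \<Sum>k=1..n. rademacher k t * x k \<omega>)) \<partial>lborel)
      = (\<integral>\<^sup>+ t. ennreal (w / y) * indicator {0..1::real} t \<partial>lborel)"
    by (intro nn_integral_cong_AE) (auto elim: AE_mp)
  also have "\<dots> = ennreal (w / y)" by (simp add: nn_integral_cmult_indicator)
  finally have "w / y \<le> K * real n powr (1 / p)"
    using bound_n K by (simp add: ennreal_le_iff)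
  then show ?thesis using y by (simp add: field_simps)
qed

lemma power_growth_from_integer_steps:
  assumes phi: "orlicz_function \<phi>" and K: "0 < K" and p: "0 < p" and c: "0 \<le> c" "c \<le> 1"
    and y: "0 < y" and a: "1 \<le> a"
    and step: "\<And>n. 1 \<le> n \<Longrightarrow> real n \<le> (a / K) powr p \<Longrightarrow>
      c * real n * \<phi> y \<le> \<phi> (K * real n powr (1 / p) * y)"
  shows "c / (2 * K powr p) * a powr p * \<phi> y \<le> \<phi> (a * y)"
proof -
  define x where "x = (a / K) powr p"
  have "c / (2 * K powr p) * a powr p = c * (x / 2)"
    using K a by (simp add: x_def powr_divide)
  then have coeff: "c / (2 * K powr p) * a powr p * \<phi> y = c * (x / 2) * \<phi> y"
    by (rule arg_cong[where f = "\<lambda>r. r * \<phi> y"])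
  have phi_y: "0 < \<phi> y" using orlicz_function_pos[OF phi y] .
  have y_le: "\<phi> y \<le> \<phi> (a * y)" using orlicz_function_le_iff[OF phi, of y "a * y"] y a by simp
  show ?thesis
  proof (cases "x < 1")
    case True
    then have "c * (x / 2) \<le> 1" using c by (intro mult_le_one) (auto simp: x_def)
    then have "c * (x / 2) * \<phi> y \<le> \<phi> y" using phi_y by (simp add: mult_le_cancel_right1)
    then show ?thesis using y_le coeff by linarith
  next
    case False
    \<comment> \<open>round \<open>x\<close> down to an integer, losing at most a factor 2\<close>
    define n where "n = nat \<lfloor>x\<rfloor>"
    have "real n = of_int \<lfloor>x\<rfloor>" using False by (simp add: n_def)
    moreover have "of_int \<lfloor>x\<rfloor> \<le> x" "x < of_int \<lfloor>x\<rfloor> + 1" by linarith+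
    ultimately have n1: "1 \<le> n" and "real n \<le> x" "x < real n + 1" using False by linarith+
    then have n: "1 \<le> n" "real n \<le> x" "x / 2 \<le> real n" by auto
    have "real n powr (1 / p) \<le> x powr (1 / p)" using n p by (intro powr_mono2) auto
    also have "\<dots> = a / K" using p a K by (simp add: x_def powr_powr)
    finally have "K * real n powr (1 / p) \<le> a" using K by (simp add: field_simps)
    then have "K * real n powr (1 / p) * y \<le> a * y" using y by (simp add: mult_right_mono)
    then have step_le: "\<phi> (K * real n powr (1 / p) * y) \<le> \<phi> (a * y)"
      using orlicz_function_le_iff[OF phi, of "K * real n powr (1 / p) * y" "a * y"] K y a by simp
    have "c * (x / 2) * \<phi> y \<le> c * real n * \<phi> y"
      using n c phi_y by (intro mult_right_mono mult_left_mono) auto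
    also have "\<dots> \<le> \<phi> (a * y)" using step[OF n(1)] n(2) step_le by (simp add: x_def)
    finally show ?thesis using coeff by linarith
  qed
qed

lemma nonatomic_type_growth_step:
  assumes phi: "orlicz_function \<phi>" and na: "nonatomic M" and bound: "orlicz_type_bound K p \<phi> M"
    and K: "0 \<le> K" and y: "0 < y" and n: "1 \<le> n"
    and total: "ennreal (1 / \<phi> y) \<le> emeasure M (space M)"
  shows "real n * \<phi> y \<le> \<phi> (K * real n powr (1 / p) * y)"
proof -
  have phi_y: "0 < \<phi> y" using orlicz_function_pos[OF phi y] .
  define m where "m = 1 / (real n * \<phi> y)"
  have m: "0 < m" "real n * m = 1 / \<phi> y" using phi_y n by (auto simp: m_def)
  obtain A where A: "\<forall>k\<in>{1..n}. A k \<in> sets M \<and> emeasure M (A k) = ennreal m"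
    and disj: "disjoint_family_on A {1..n}"
    using nonatomic_disjoint_family_emeasure_eq[OF na, of m n] m total by auto
  obtain w where w: "0 < w" "\<phi> w = real n * \<phi> y"
    using orlicz_function_surj[OF phi, of "real n * \<phi> y"] phi_y n by auto
  have "\<phi> w * m = 1" "\<phi> y * (real n * m) = 1" using w(2) m phi_y n by (auto simp: m_def)
  then have "w \<le> K * real n powr (1 / p) * y"
    using A
    by (intro orlicz_type_bound_disjoint_indicators[OF phi bound K n m(1) _ _ disj w(1) _ y]) auto
  then show ?thesis
    using orlicz_function_le_iff[OF phi, of w] w K y by simp
qed

lemma nat_ceiling_inverse_bounds:
  fixes t :: real
  assumes "0 < t" "t \<le> 1"
  shows "1 \<le> nat \<lceil>1 / t\<rceil>" "1 / real (nat \<lceil>1 / t\<rceil>) \<le> t" "t \<le> 2 / real (nat \<lceil>1 / t\<rceil>)"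
proof -
  define N where "N = nat \<lceil>1 / t\<rceil>"
  have "1 \<le> 1 / t" using assms by simp
  then have N: "1 / t \<le> real N" "real N \<le> 2 / t" unfolding N_def by linarith+
  then show "1 \<le> nat \<lceil>1 / t\<rceil>" using \<open>1 \<le> 1 / t\<close> unfolding N_def by linarith
  then have "0 < real N" using assms by (simp add: N_def)
  then show "1 / real (nat \<lceil>1 / t\<rceil>) \<le> t" "t \<le> 2 / real (nat \<lceil>1 / t\<rceil>)"
    using N assms unfolding N_def[symmetric] by (auto simp: divide_le_eq le_divide_eq mult.commute)
qed

lemma nat_ceiling_divide_bounds:
  fixes n N :: nat
  assumes "1 \<le> n" "n \<le> N"
  shows "1 \<le> nat \<lceil>real N / real n\<rceil>" "real N \<le> real n * real (nat \<lceil>real N / real n\<rceil>)"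
    "real n * real (nat \<lceil>real N / real n\<rceil>) \<le> 2 * real N"
proof -
  define m where "m = nat \<lceil>real N / real n\<rceil>"
  have ratio: "1 \<le> real N / real n" using assms by simp
  then have "real m = of_int \<lceil>real N / real n\<rceil>" by (simp add: m_def)
  moreover have "real N / real n \<le> of_int \<lceil>real N / real n\<rceil>"
    "of_int \<lceil>real N / real n\<rceil> < real N / real n + 1" by linarith+
  ultimately have m: "real N / real n \<le> real m" "real m < real N / real n + 1" by linarith+
  then show "1 \<le> nat \<lceil>real N / real n\<rceil>" using ratio unfolding m_def by linarith
  show "real N \<le> real n * real (nat \<lceil>real N / real n\<rceil>)"
    using m(1) assms by (simp add: m_def[symmetric] divide_le_eq mult.commute)
  have "real n * real m < real n * (real N / real n + 1)"
    using m(2) assms by (intro mult_strict_left_mono) auto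
  also have "\<dots> = real N + real n" using assms by (simp add: field_simps)
  finally show "real n * real (nat \<lceil>real N / real n\<rceil>) \<le> 2 * real N"
    using assms unfolding m_def by linarith
qed

lemma count_space_type_estimate:
  assumes phi: "orlicz_function \<phi>" and bound: "orlicz_type_bound K p \<phi> (count_space S)" and K: "0 \<le> K"
    and f: "bij_betw f (UNIV :: nat set) S" and m: "1 \<le> m" and n: "1 \<le> n"
    and z: "0 < z" "\<phi> z = 1 / real m" and y: "0 < y" "\<phi> y = 1 / (real n * real m)"
  shows "z \<le> K * real n powr (1 / p) * y"
proof -
  obtain A where A: "\<forall>k\<in>{1..n}. A k \<subseteq> S \<and> emeasure (count_space S) (A k) = ennreal (real m)"
    and disj: "disjoint_family_on A {1..n}"
    using count_space_disjoint_family_card_eq[OF f, of n m] by blast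
  show ?thesis
    using A m n z y
    by (intro orlicz_type_bound_disjoint_indicators[OF phi bound K n _ _ _ disj z(1) _ y(1)]) auto
qed

lemma count_space_type_scale_bound:
  assumes phi: "orlicz_function \<phi>" and bound: "orlicz_type_bound K p \<phi> (count_space S)"
    and K: "0 < K" and p: "0 < p" and f: "bij_betw f (UNIV :: nat set) S"
    and v: "0 < v" "\<phi> v = 1" and u: "0 < u" "\<phi> u \<le> 1" and a: "0 \<le> a" "a * u \<le> v"
  shows "(a / K) powr p \<le> real (nat \<lceil>1 / \<phi> u\<rceil>)"
proof -
  define N where "N = nat \<lceil>1 / \<phi> u\<rceil>"
  have phi_u: "0 < \<phi> u" using orlicz_function_pos[OF phi u(1)] .
  have N: "1 \<le> N" "1 / real N \<le> \<phi> u"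
    using nat_ceiling_inverse_bounds[OF phi_u u(2), folded N_def] by auto
  obtain y where y: "0 < y" "\<phi> y = 1 / real N" using orlicz_function_surj[OF phi, of "1 / real N"] N by auto
  have "y \<le> u" using orlicz_function_le_iff[OF phi, of y u] y N u by simp
  have "v \<le> K * real N powr (1 / p) * y"
    using count_space_type_estimate[OF phi bound _ f order.refl N(1), of v y] K v y by simp
  also have "\<dots> \<le> K * real N powr (1 / p) * u" using \<open>y \<le> u\<close> K by (intro mult_left_mono) auto
  finally have "a * u \<le> K * real N powr (1 / p) * u" using a(2) by linarith
  then have "a \<le> K * real N powr (1 / p)" using u(1) by simp
  then have "(a / K) powr p \<le> (real N powr (1 / p)) powr p"
    using K a p by (intro powr_mono2) (auto simp: field_simps)
  also have "\<dots> = real N" using p by (simp add: powr_powr)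
  finally show ?thesis by (simp add: N_def)
qed

lemma count_space_type_growth_step:
  assumes phi: "orlicz_function \<phi>" and bound: "orlicz_type_bound K p \<phi> (count_space S)"
    and K: "0 \<le> K" and f: "bij_betw f (UNIV :: nat set) S"
    and u: "0 < u" "\<phi> u \<le> 1" and n: "1 \<le> n" "n \<le> nat \<lceil>1 / \<phi> u\<rceil>"
  shows "1 / 4 * real n * \<phi> u \<le> \<phi> (K * real n powr (1 / p) * u)"
proof -
  define N where "N = nat \<lceil>1 / \<phi> u\<rceil>"
  have phi_u: "0 < \<phi> u" using orlicz_function_pos[OF phi u(1)] .
  have N: "1 / real N \<le> \<phi> u" "\<phi> u \<le> 2 / real N"
    using nat_ceiling_inverse_bounds[OF phi_u u(2), folded N_def] by auto
  have "n \<le> N" using n(2) unfolding N_def .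
  \<comment> \<open>blocks of \<open>m\<close> atoms, \<open>n\<close> of them making up between \<open>N\<close> and \<open>2 N\<close> atoms\<close>
  define m where "m = nat \<lceil>real N / real n\<rceil>"
  have m: "1 \<le> m" "real N \<le> real n * real m" "real n * real m \<le> 2 * real N"
    using nat_ceiling_divide_bounds[OF n(1) \<open>n \<le> N\<close>] by (simp_all add: m_def)
  obtain y where y: "0 < y" "\<phi> y = 1 / (real n * real m)"
    using orlicz_function_surj[OF phi, of "1 / (real n * real m)"] m n by auto
  obtain z where z: "0 < z" "\<phi> z = 1 / real m"
    using orlicz_function_surj[OF phi, of "1 / real m"] m by auto
  have "1 / (real n * real m) \<le> 1 / real N"
    using m n \<open>n \<le> N\<close> by (intro divide_left_mono) (auto intro!: mult_pos_pos)
  then have "y \<le> u" using orlicz_function_le_iff[OF phi, of y u] y N u by simp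
  have "z \<le> K * real n powr (1 / p) * y"
    by (rule count_space_type_estimate[OF phi bound K f m(1) n(1) z y])
  also have "\<dots> \<le> K * real n powr (1 / p) * u" using \<open>y \<le> u\<close> K by (intro mult_left_mono) auto
  finally have "\<phi> z \<le> \<phi> (K * real n powr (1 / p) * u)"
    using orlicz_function_le_iff[OF phi, of z "K * real n powr (1 / p) * u"] z(1) K u by simp
  moreover have "real n * \<phi> u \<le> 4 * \<phi> z"
  proof -
    have N_pos: "0 < real N" using n \<open>n \<le> N\<close> by simp
    have "real n * \<phi> u \<le> real n * (2 / real N)" using N(2) by (intro mult_left_mono) auto
    also have "\<dots> \<le> 4 / real m" using m(1,3) N_pos by (simp add: field_simps)
    finally show ?thesis using z(2) by simp
  qed
  ultimately show ?thesis by linarith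
qed

lemma Delta_star_SA_if_type_bound:
  assumes phi: "orlicz_function \<phi>" and M: "measure_setting SA M"
    and bound: "orlicz_type_bound K p \<phi> M" and K: "0 < K" and p: "0 < p"
  shows "Delta_star SA p \<phi>"
proof -
  have na: "nonatomic M" and total: "emeasure M (space M) = \<infinity>"
    using M by (auto simp: measure_setting_def)
  have "1 / (2 * K powr p) * a powr p * \<phi> u \<le> \<phi> (a * u)" if a: "1 \<le> a" and u: "0 \<le> u" for a u
  proof (cases "u = 0")
    case True
    then show ?thesis using phi by (simp add: orlicz_function_def)
  next
    case False
    then have "0 < u" using u by simp
    from power_growth_from_integer_steps[OF phi K p _ _ this a, of 1]
    show ?thesis
      using nonatomic_type_growth_step[OF phi na bound _ \<open>0 < u\<close>] K total by simp
  qed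
  then show ?thesis using K unfolding Delta_star_def by (intro exI[of _ "1 / (2 * K powr p)"]) auto
qed

lemma Delta_star_SB_if_type_bound:
  assumes phi: "orlicz_function \<phi>" and M: "measure_setting SB M"
    and bound: "orlicz_type_bound K p \<phi> M" and K: "0 < K" and p: "0 < p"
  shows "Delta_star SB p \<phi>"
proof -
  have na: "nonatomic M" and total: "0 < emeasure M (space M)" "emeasure M (space M) < \<infinity>"
    using M by (auto simp: measure_setting_def)
  define r where "r = measure M (space M)"
  have r: "emeasure M (space M) = ennreal r" "0 < r"
    using total by (auto simp: r_def emeasure_eq_ennreal_measure less_top)
  obtain v where v: "0 < v" "\<phi> v = 1 / r" using orlicz_function_surj[OF phi, of "1 / r"] r by auto
  have "1 / (2 * K powr p) * a powr p * \<phi> u \<le> \<phi> (a * u)" if a: "1 \<le> a" and u: "v \<le> u" for a u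
  proof -
    have "0 < u" using u v by linarith
    then have "1 / r \<le> \<phi> u" using orlicz_function_le_iff[OF phi, of v u] u v by simp
    then have big: "ennreal (1 / \<phi> u) \<le> emeasure M (space M)"
      using r orlicz_function_pos[OF phi \<open>0 < u\<close>] by (auto simp: field_simps intro!: ennreal_leI)
    from power_growth_from_integer_steps[OF phi K p _ _ \<open>0 < u\<close> a, of 1]
    show ?thesis using nonatomic_type_growth_step[OF phi na bound _ \<open>0 < u\<close>] K big by simp
  qed
  then show ?thesis
    using K v unfolding Delta_star_def by (intro exI[of _ "1 / (2 * K powr p)"]) (auto intro!: exI[of _ v])
qed

lemma Delta_star_SC_if_type_bound:
  assumes phi: "orlicz_function \<phi>" and M: "measure_setting SC M"
    and bound: "orlicz_type_bound K p \<phi> M" and K: "0 < K" and p: "0 < p"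
  shows "Delta_star SC p \<phi>"
proof -
  obtain f S where f: "bij_betw f (UNIV :: nat set) S" and MS: "M = count_space S"
    using M by (auto simp: measure_setting_def)
  have bound: "orlicz_type_bound K p \<phi> (count_space S)" using bound unfolding MS .
  obtain v where v: "0 < v" "\<phi> v = 1" using orlicz_function_surj[OF phi, of 1] by auto
  have "1 / 4 / (2 * K powr p) * a powr p * \<phi> u \<le> \<phi> (a * u)"
    if a: "1 \<le> a" and u: "0 \<le> u" and au: "a * u \<le> v" for a u
  proof (cases "u = 0")
    case True
    then show ?thesis using phi by (simp add: orlicz_function_def)
  next
    case False
    then have "0 < u" using u by simp
    have "u \<le> a * u" using a u by (simp add: mult_le_cancel_right1)
    then have "u \<le> v" using au by linarith
    then have "\<phi> u \<le> 1" using orlicz_function_le_iff[OF phi, of u v] u v by simp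
    note scale = count_space_type_scale_bound[OF phi bound K p f v \<open>0 < u\<close> this _ au]
    show ?thesis
    proof (rule power_growth_from_integer_steps[OF phi K p _ _ \<open>0 < u\<close> a])
      fix n :: nat assume "1 \<le> n" "real n \<le> (a / K) powr p"
      then show "1 / 4 * real n * \<phi> u \<le> \<phi> (K * real n powr (1 / p) * u)"
        using count_space_type_growth_step[OF phi bound _ f \<open>0 < u\<close> \<open>\<phi> u \<le> 1\<close>] scale a K
        by (simp add: le_nat_iff)
    qed auto
  qed
  then show ?thesis
    using K v unfolding Delta_star_def by (intro exI[of _ "1 / 4 / (2 * K powr p)"]) auto
qed

theorem mainTheorem8:
  fixes M :: "'a measure" and \<phi> :: "real \<Rightarrow> real" and p :: real and s :: setting
  assumes "measure_setting s M"
    and "0 < p" and "p \<le> 2"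
    and "orlicz_function \<phi>"
    and "alpha_index s \<phi> > 0"
    and "orlicz_has_type p \<phi> M"
  shows "Delta_star s p \<phi>"
proof -
  obtain K where K: "0 < K" and bound: "orlicz_type_bound K p \<phi> M"
    using assms(6) orlicz_has_type_iff by blast
  show ?thesis
    using assms(1) Delta_star_SA_if_type_bound[OF assms(4) _ bound K assms(2)]
      Delta_star_SB_if_type_bound[OF assms(4) _ bound K assms(2)]
      Delta_star_SC_if_type_bound[OF assms(4) _ bound K assms(2)]
    by (cases s) auto
qed

end
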